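(* Let $\Gamma$ be a strict finite normal-form game (any number of players, each having at least $2$ strategies) whose preference graph has no sink and no directed cycle of length $4$. Then $\Gamma$ has at least $8$ strategy profiles. Moreover, if $\Gamma$ has exactly $8$ profiles, then $\Gamma$ is a $2\times2\times2$ game and its preference graph is isomorphic (equivalently, equal up to renaming strategies and players) to Jordan's graph.
   Context: A finite normal-form game has players $1,\dots,N$, finite strategy sets $S_1,\dots,S_N$ and utilities $u_i:\prod_j S_j\to\mathbb{R}$; profiles are elements of $Z=\prod_j S_j$. Two distinct profiles are $i$-comparable if they differ only in player $i$'s strategy. The preference graph has node set $Z$ and an arc $p\to q$ between $i$-comparable profiles whenever $u_i(q)\ge u_i(p)$. A game is strict if $u_i(p)\ne u_i(q)$ for all $i$-comparable $p,q$ and all $i$. Jordan's graph ("Mismatching Pennies") is the preference graph of the three-player game with $S_1=S_2=S_3=\{0,1\}$ in which player $i$ receives payoff $1$ if $s_i\ne s_{i-1}$ and $0$ otherwise (indices mod $3$, so player 1 compares with player 3); i.e. for each $i$ there is an arc from the profile with $s_i=s_{i-1}$ to the $i$-comparable profile with $s_i\neq s_{i-1}$. *)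

theory Defs
  imports Complex_Main
begin

text \<open>A finite normal-form game with players 0,...,N-1 (player i of the paper is index i-1),
strategy sets S i and utilities u i. Profiles are lists of length N.\<close>

definition profiles :: "nat \<Rightarrow> (nat \<Rightarrow> 'a set) \<Rightarrow> 'a list set" where
  "profiles N S = {p. length p = N \<and> (\<forall>i<N. p ! i \<in> S i)}"

definition comparable :: "nat \<Rightarrow> (nat \<Rightarrow> 'a set) \<Rightarrow> nat \<Rightarrow> 'a list \<Rightarrow> 'a list \<Rightarrow> bool" where
  "comparable N S i p q \<longleftrightarrow> i < N \<and> p \<in> profiles N S \<and> q \<in> profiles N S \<and> p \<noteq> q \<and>
     (\<forall>j<N. j \<noteq> i \<longrightarrow> p ! j = q ! j)"

definition pref_arc :: "nat \<Rightarrow> (nat \<Rightarrow> 'a set) \<Rightarrow> (nat \<Rightarrow> 'a list \<Rightarrow> real) \<Rightarrow> 'a list \<Rightarrow> 'a list \<Rightarrow> bool" where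
  "pref_arc N S u p q \<longleftrightarrow> (\<exists>i. comparable N S i p q \<and> u i q \<ge> u i p)"

definition strict_game :: "nat \<Rightarrow> (nat \<Rightarrow> 'a set) \<Rightarrow> (nat \<Rightarrow> 'a list \<Rightarrow> real) \<Rightarrow> bool" where
  "strict_game N S u \<longleftrightarrow> (\<forall>i p q. comparable N S i p q \<longrightarrow> u i p \<noteq> u i q)"

definition has_sink :: "nat \<Rightarrow> (nat \<Rightarrow> 'a set) \<Rightarrow> (nat \<Rightarrow> 'a list \<Rightarrow> real) \<Rightarrow> bool" where
  "has_sink N S u \<longleftrightarrow> (\<exists>p \<in> profiles N S. \<not> (\<exists>q. pref_arc N S u p q))"

definition has_4cycle :: "nat \<Rightarrow> (nat \<Rightarrow> 'a set) \<Rightarrow> (nat \<Rightarrow> 'a list \<Rightarrow> real) \<Rightarrow> bool" where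
  "has_4cycle N S u \<longleftrightarrow> (\<exists>a b c d. distinct [a, b, c, d] \<and>
     pref_arc N S u a b \<and> pref_arc N S u b c \<and> pref_arc N S u c d \<and> pref_arc N S u d a)"

text \<open>Mismatching Pennies: players 0,1,2, strategies bool; player i gets 1 iff
  s_i differs from s_{i-1 mod 3}.\<close>
definition jordan_S :: "nat \<Rightarrow> bool set" where
  "jordan_S i = UNIV"

definition jordan_u :: "nat \<Rightarrow> bool list \<Rightarrow> real" where
  "jordan_u i s = (if s ! i \<noteq> s ! ((i + 2) mod 3) then 1 else 0)"

definition iso_to_jordan :: "nat \<Rightarrow> (nat \<Rightarrow> 'a set) \<Rightarrow> (nat \<Rightarrow> 'a list \<Rightarrow> real) \<Rightarrow> bool" where
  "iso_to_jordan N S u \<longleftrightarrow> (\<exists>f. bij_betw f (profiles N S) (profiles 3 jordan_S) \<and>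
     (\<forall>p \<in> profiles N S. \<forall>q \<in> profiles N S.
        pref_arc N S u p q \<longleftrightarrow> pref_arc 3 jordan_S jordan_u (f p) (f q)))"

end

theory Submission
  imports Defs "HOL-Library.FuncSet"
begin

text \<open>
  With at most one player the best profile is a sink. With two players, if player k has only two
  strategies, take in each of the two rows of k the profile best for the other player j: it can only
  be left by a move of k into the other row, from where j moves up to the best profile of that row,
  and these four arcs form a 4-cycle. So both players have at least three strategies, giving at
  least 9 profiles. With three or more players there are at least 8 profiles, with equality only for
  2x2x2 games. Their preference graphs are orientations of the 3-cube, determined by the best
  responses of each player to the other two: no sink means no pure equilibrium, and no 4-cycle means
  that no face of the cube is a game of matching pennies. A finite check shows that then every
  player matches or mismatches a single opponent, the opponents forming a 3-cycle and the number of
  mismatching players being odd; relabelling strategies turns such a game into Mismatching Pennies.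
\<close>

lemma comparable_sym: "comparable N S i p q \<Longrightarrow> comparable N S i q p"
  by (auto simp: comparable_def)

lemma comparable_unique_player:
  assumes "comparable N S i p q" and "comparable N S j p q"
  shows "i = j"
proof -
  from assms(1) have "length p = N" "length q = N" "p \<noteq> q"
    by (auto simp: comparable_def profiles_def)
  then obtain k where "k < N" "p ! k \<noteq> q ! k"
    using nth_equalityI by metis
  with assms show ?thesis by (auto simp: comparable_def)
qed

lemma pref_arc_iff_less:
  assumes "strict_game N S u" and "comparable N S i p q"
  shows "pref_arc N S u p q \<longleftrightarrow> u i p < u i q"
proof
  assume "pref_arc N S u p q"
  then obtain i' where "comparable N S i' p q" "u i' p \<le> u i' q"
    by (auto simp: pref_arc_def)
  moreover from this(1) have "i' = i"
    using assms(2) by (rule comparable_unique_player)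
  ultimately show "u i p < u i q"
    using assms unfolding strict_game_def by (metis order_le_less)
qed (use assms(2) in \<open>auto simp: pref_arc_def\<close>)

lemma pref_arc_asym:
  assumes "strict_game N S u" and "pref_arc N S u p q"
  shows "\<not> pref_arc N S u q p"
proof -
  obtain i where i: "comparable N S i p q"
    using assms(2) by (auto simp: pref_arc_def)
  show ?thesis
    using pref_arc_iff_less[OF assms(1) i] pref_arc_iff_less[OF assms(1) comparable_sym[OF i]] assms(2)
    by simp
qed

lemma finite_profiles_card:
  assumes "\<forall>i<N. finite (S i)"
  shows "finite (profiles N S)" and "card (profiles N S) = (\<Prod>i<N. card (S i))"
proof -
  have "bij_betw (\<lambda>p. restrict ((!) p) {..<N}) (profiles N S) (PiE {..<N} S)"
  proof (rule bij_betw_byWitness[where f' = "\<lambda>f. map f [0..<N]"])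
    show "\<forall>p\<in>profiles N S. map (restrict ((!) p) {..<N}) [0..<N] = p"
      by (auto simp: profiles_def intro: nth_equalityI)
    show "\<forall>f\<in>PiE {..<N} S. restrict ((!) (map f [0..<N])) {..<N} = f"
      by (auto simp: PiE_def extensional_def)
    show "(\<lambda>p. restrict ((!) p) {..<N}) ` profiles N S \<subseteq> PiE {..<N} S"
      by (rule image_subsetI) (simp add: profiles_def)
    show "(\<lambda>f. map f [0..<N]) ` PiE {..<N} S \<subseteq> profiles N S"
      by (rule image_subsetI) (simp add: profiles_def PiE_iff)
  qed
  moreover have "finite (PiE {..<N} S)"
    using assms by (auto intro: finite_PiE)
  ultimately show "finite (profiles N S)" and "card (profiles N S) = (\<Prod>i<N. card (S i))"
    by (auto simp: bij_betw_finite bij_betw_same_card card_PiE)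
qed

lemma card_profiles_ge_power:
  assumes "\<forall>i<N. finite (S i) \<and> k \<le> card (S i)"
  shows "k ^ N \<le> card (profiles N S)"
proof -
  have "k ^ N = (\<Prod>i<N. k)" by simp
  also have "\<dots> \<le> (\<Prod>i<N. card (S i))"
    using assms by (intro prod_mono) auto
  finally show ?thesis
    using assms finite_profiles_card(2) by metis
qed

lemma card_profiles_ge_3_mult_power:
  assumes "\<forall>i<N. finite (S i) \<and> 2 \<le> card (S i)" and "j < N" and "3 \<le> card (S j)"
  shows "3 * 2 ^ (N - 1) \<le> card (profiles N S)"
proof -
  have "3 * 2 ^ (N - 1) = 3 * (\<Prod>i\<in>{..<N} - {j}. 2::nat)"
    using assms(2) by simp
  also have "\<dots> \<le> card (S j) * (\<Prod>i\<in>{..<N} - {j}. card (S i))"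
    using assms by (intro mult_le_mono prod_mono) auto
  also have "\<dots> = (\<Prod>i<N. card (S i))"
    using assms(2) by (simp add: prod.remove)
  finally show ?thesis
    using assms(1) finite_profiles_card(2) by metis
qed

lemma finite_has_maximiser:
  fixes f :: "'a \<Rightarrow> 'b::linorder"
  assumes "finite A" and "A \<noteq> {}"
  shows "\<exists>x\<in>A. \<forall>y\<in>A. f y \<le> f x"
  using obtains_MAX[OF assms, of f] Max_ge assms(1) by (metis finite_imageI imageI)

lemma has_sink_no_players: "has_sink 0 S u"
  by (auto simp: has_sink_def profiles_def pref_arc_def comparable_def)

lemma has_sink_one_player:
  assumes "strict_game 1 S u" and "finite (S 0)" and "S 0 \<noteq> {}"
  shows "has_sink 1 S u"
proof -
  obtain x where "x \<in> S 0"
    using assms(3) by blast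
  then have "[x] \<in> profiles 1 S"
    by (simp add: profiles_def)
  moreover have "finite (profiles 1 S)"
    using assms(2) by (simp add: finite_profiles_card)
  ultimately obtain p where p: "p \<in> profiles 1 S" and max: "\<forall>q \<in> profiles 1 S. u 0 q \<le> u 0 p"
    using finite_has_maximiser[of "profiles 1 S" "u 0"] by blast
  have "\<not> pref_arc 1 S u p q" for q
  proof
    assume arc: "pref_arc 1 S u p q"
    then obtain i where i: "comparable 1 S i p q"
      by (auto simp: pref_arc_def)
    then have "i = 0" and "q \<in> profiles 1 S"
      by (auto simp: comparable_def)
    then show False
      using pref_arc_iff_less[OF assms(1) i] arc max by fastforce
  qed
  with p show ?thesis
    by (auto simp: has_sink_def)
qed

lemma two_player_profile_eqI:
  assumes "k < 2" "j < 2" "k \<noteq> j" and "p \<in> profiles 2 S" "q \<in> profiles 2 S"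
    and "p ! k = q ! k" "p ! j = q ! j"
  shows "p = q"
proof (rule nth_equalityI)
  show "length p = length q"
    using assms(4,5) by (simp add: profiles_def)
  show "p ! i = q ! i" if "i < length p" for i
    using that assms by (auto simp: profiles_def less_2_cases_iff)
qed

lemma comparable_two_player_iff:
  assumes "k < 2" "j < 2" "k \<noteq> j"
  shows "comparable 2 S i p q \<longleftrightarrow> p \<in> profiles 2 S \<and> q \<in> profiles 2 S \<and> p \<noteq> q \<and>
    (i = k \<and> p ! j = q ! j \<or> i = j \<and> p ! k = q ! k)"
  using assms by (auto simp: comparable_def less_2_cases_iff)

lemma two_player_leave_best_response:
  assumes strict: "strict_game 2 S u" and no_sink: "\<not> has_sink 2 S u"
    and kj: "k < 2" "j < 2" "k \<noteq> j" and p: "p \<in> profiles 2 S"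
    and best: "\<forall>q \<in> profiles 2 S. q ! k = p ! k \<longrightarrow> u j q \<le> u j p"
  obtains q where "q \<in> profiles 2 S" "q ! j = p ! j" "q ! k \<noteq> p ! k" "pref_arc 2 S u p q"
proof -
  obtain q where arc: "pref_arc 2 S u p q"
    using no_sink p by (auto simp: has_sink_def)
  then obtain i where i: "comparable 2 S i p q"
    by (auto simp: pref_arc_def)
  then have "u i p < u i q"
    using pref_arc_iff_less[OF strict] arc by blast
  then have "\<not> (i = j \<and> p ! k = q ! k)"
    using best i by (auto simp: comparable_two_player_iff[OF kj])
  then have "q \<in> profiles 2 S" "q ! j = p ! j" "q ! k \<noteq> p ! k"
    using i two_player_profile_eqI[OF kj p, where q = q] by (auto simp: comparable_two_player_iff[OF kj])
  with arc show ?thesis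
    using that by blast
qed

lemma two_player_has_4cycle:
  assumes strict: "strict_game 2 S u" and no_sink: "\<not> has_sink 2 S u"
    and fin: "finite (profiles 2 S)"
    and k: "S k = {a, b}" "a \<noteq> b" and kj: "k < 2" "j < 2" "k \<noteq> j" and "S j \<noteq> {}"
  shows "has_4cycle 2 S u"
proof -
  let ?P = "profiles 2 S"
  define row where "row x = {p \<in> ?P. p ! k = x}" for x
  define best where "best x p \<longleftrightarrow> p \<in> row x \<and> (\<forall>q \<in> row x. u j q \<le> u j p)" for x p
  have best_exists: "\<exists>p. best x p" if "x \<in> S k" for x
  proof -
    obtain y where "y \<in> S j"
      using \<open>S j \<noteq> {}\<close> by blast
    then have "(if k = 0 then [x, y] else [y, x]) \<in> row x"
      using kj that by (auto simp: row_def profiles_def less_2_cases_iff)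
    moreover have "finite (row x)"
      using fin by (simp add: row_def)
    ultimately show ?thesis
      unfolding best_def using finite_has_maximiser[of "row x" "u j"] by blast
  qed
  have arc_to_best: "pref_arc 2 S u q p" if "best x p" "q \<in> row x" "q \<noteq> p" for x p q
  proof -
    have "comparable 2 S j q p"
      using that by (auto simp: comparable_two_player_iff[OF kj] best_def row_def)
    with that show ?thesis
      by (auto simp: pref_arc_def best_def)
  qed
  have arc_from_best: "\<exists>q \<in> row y. q ! j = p ! j \<and> pref_arc 2 S u p q"
    if "best x p" "{x, y} = {a, b}" for x y p
  proof -
    have p: "p \<in> ?P" "p ! k = x"
      using \<open>best x p\<close> by (auto simp: best_def row_def)
    moreover have "\<forall>q \<in> ?P. q ! k = p ! k \<longrightarrow> u j q \<le> u j p"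
      using \<open>best x p\<close> p by (auto simp: best_def row_def)
    ultimately obtain q where q: "q \<in> ?P" "q ! j = p ! j" "q ! k \<noteq> p ! k" "pref_arc 2 S u p q"
      using two_player_leave_best_response[OF strict no_sink kj] by blast
    moreover have "q ! k \<in> {a, b}"
      using q(1) kj k by (auto simp: profiles_def)
    ultimately show ?thesis
      using that(2) k(2) p(2) by (auto simp: row_def doubleton_eq_iff)
  qed
  obtain pa pb where pa: "best a pa" and pb: "best b pb"
    using best_exists[of a] best_exists[of b] k(1) by auto
  obtain qb where qb: "qb \<in> row b" "qb ! j = pa ! j" "pref_arc 2 S u pa qb"
    using arc_from_best[OF pa, of b] by blast
  obtain qa where qa: "qa \<in> row a" "qa ! j = pb ! j" "pref_arc 2 S u pb qa"
    using arc_from_best[OF pb, of a] by blast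
  have rows: "pa \<in> row a" "pb \<in> row b"
    using pa pb by (auto simp: best_def)
  have "qb \<noteq> pb"
  proof
    assume "qb = pb"
    then have "qa = pa"
      using qa qb rows two_player_profile_eqI[OF kj, where p = qa and q = pa] by (auto simp: row_def)
    then show False
      using pref_arc_asym[OF strict qb(3)] qa(3) \<open>qb = pb\<close> by simp
  qed
  moreover have "qa \<noteq> pa"
    using calculation qa qb rows two_player_profile_eqI[OF kj, where p = qb and q = pb] by (auto simp: row_def)
  ultimately have "pref_arc 2 S u qb pb" "pref_arc 2 S u qa pa"
    using arc_to_best pa pb qa qb by auto
  moreover have "distinct [pa, qb, pb, qa]"
    using rows qa qb k(2) \<open>qb \<noteq> pb\<close> \<open>qa \<noteq> pa\<close> by (auto simp: row_def)
  ultimately show ?thesis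
    unfolding has_4cycle_def using qa(3) qb(3) by blast
qed

lemma length_3_conv: "length s = 3 \<longleftrightarrow> (\<exists>a b c. s = [a, b, c])"
  by (auto simp: numeral_3_eq_3 length_Suc_conv)

lemma all_less_3: "(\<forall>j<3. P j) \<longleftrightarrow> P 0 \<and> P 1 \<and> P (2::nat)"
  by (auto simp: numeral_3_eq_3 numeral_2_eq_2 less_Suc_eq)

lemma less_3_iff: "(i::nat) < 3 \<longleftrightarrow> i = 0 \<or> i = 1 \<or> i = 2"
  by (auto simp: numeral_3_eq_3 numeral_2_eq_2 less_Suc_eq)

lemma profiles_3: "p \<in> profiles 3 S \<longleftrightarrow> (\<exists>x y z. p = [x, y, z] \<and> x \<in> S 0 \<and> y \<in> S 1 \<and> z \<in> S 2)"
  by (auto simp: profiles_def length_3_conv all_less_3)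

lemma jordan_profiles: "profiles 3 jordan_S = {s. \<exists>a b c. s = [a, b, c]}"
  by (auto simp: profiles_3 jordan_S_def)

lemma comparable_3:
  "comparable 3 S i [x, y, z] [x', y', z'] \<longleftrightarrow>
     [x, y, z] \<in> profiles 3 S \<and> [x', y', z'] \<in> profiles 3 S \<and>
     (i = 0 \<and> x \<noteq> x' \<and> y = y' \<and> z = z' \<or> i = 1 \<and> x = x' \<and> y \<noteq> y' \<and> z = z' \<or>
      i = 2 \<and> x = x' \<and> y = y' \<and> z \<noteq> z')"
proof -
  have "comparable 3 S i [x, y, z] [x', y', z'] \<longleftrightarrow>
      [x, y, z] \<in> profiles 3 S \<and> [x', y', z'] \<in> profiles 3 S \<and> i < 3 \<and> [x, y, z] \<noteq> [x', y', z'] \<and>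
      (i \<noteq> 0 \<longrightarrow> x = x') \<and> (i \<noteq> 1 \<longrightarrow> y = y') \<and> (i \<noteq> 2 \<longrightarrow> z = z')"
    by (auto simp: comparable_def all_less_3 eq_commute[of _ i])
  then show ?thesis
    using less_3_iff[of i] by (cases "i = 0"; cases "i = 1"; cases "i = 2") auto
qed

lemma comparable_jordan_S:
  "comparable 3 jordan_S i s t \<longleftrightarrow> (\<exists>a b c. s = [a, b, c] \<and>
     (i = 0 \<and> t = [\<not> a, b, c] \<or> i = 1 \<and> t = [a, \<not> b, c] \<or> i = 2 \<and> t = [a, b, \<not> c]))"
proof (cases "s \<in> profiles 3 jordan_S \<and> t \<in> profiles 3 jordan_S")
  case True
  then obtain a b c x y z where "s = [a, b, c]" "t = [x, y, z]"
    by (auto simp: jordan_profiles)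
  then show ?thesis
    by (auto simp: comparable_3 jordan_profiles)
next
  case False
  then show ?thesis
    by (auto simp: comparable_def jordan_profiles)
qed

lemma ex_comparable_jordan_S:
  "(\<exists>i. comparable 3 jordan_S i s t \<and> P i s t) \<longleftrightarrow> (\<exists>a b c. s = [a, b, c] \<and>
     (t = [\<not> a, b, c] \<and> P 0 [a, b, c] [\<not> a, b, c] \<or> t = [a, \<not> b, c] \<and> P 1 [a, b, c] [a, \<not> b, c] \<or>
      t = [a, b, \<not> c] \<and> P 2 [a, b, c] [a, b, \<not> c]))"
  unfolding comparable_jordan_S by blast

text \<open>
  The preference graph of a strict 2x2x2 game with Boolean strategies in which player 0 strictly
  prefers X b c when the others play b and c (likewise Y a c for player 1 and Z a b for player 2).
\<close>

definition best_response_graph ::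
    "(bool \<Rightarrow> bool \<Rightarrow> bool) \<Rightarrow> (bool \<Rightarrow> bool \<Rightarrow> bool) \<Rightarrow> (bool \<Rightarrow> bool \<Rightarrow> bool) \<Rightarrow>
     bool list \<Rightarrow> bool list \<Rightarrow> bool" where
  "best_response_graph X Y Z s t \<longleftrightarrow> (\<exists>a b c. s = [a, b, c] \<and>
     (t = [\<not> a, b, c] \<and> a \<noteq> X b c \<or> t = [a, \<not> b, c] \<and> b \<noteq> Y a c \<or> t = [a, b, \<not> c] \<and> c \<noteq> Z a b))"

lemma best_response_graph_lists:
  "best_response_graph X Y Z [a, b, c] [x, y, z] \<longleftrightarrow>
     x = (\<not> a) \<and> y = b \<and> z = c \<and> a \<noteq> X b c \<or> x = a \<and> y = (\<not> b) \<and> z = c \<and> b \<noteq> Y a c \<or>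
     x = a \<and> y = b \<and> z = (\<not> c) \<and> c \<noteq> Z a b"
  by (auto simp: best_response_graph_def)

lemma best_response_graph_in_profiles:
  "best_response_graph X Y Z s t \<Longrightarrow> s \<in> profiles 3 jordan_S \<and> t \<in> profiles 3 jordan_S"
  by (auto simp: best_response_graph_def jordan_profiles)

lemma pref_arc_jordan:
  "pref_arc 3 jordan_S jordan_u = best_response_graph (\<lambda>b c. \<not> c) (\<lambda>a c. \<not> a) (\<lambda>a b. \<not> b)"
proof (intro ext)
  fix s t
  have "jordan_u 0 [a, b, c] \<le> jordan_u 0 [\<not> a, b, c] \<longleftrightarrow> a \<noteq> (\<not> c)"
    and "jordan_u 1 [a, b, c] \<le> jordan_u 1 [a, \<not> b, c] \<longleftrightarrow> b \<noteq> (\<not> a)"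
    and "jordan_u 2 [a, b, c] \<le> jordan_u 2 [a, b, \<not> c] \<longleftrightarrow> c \<noteq> (\<not> b)" for a b c
    by (auto simp: jordan_u_def)
  then show "pref_arc 3 jordan_S jordan_u s t =
      best_response_graph (\<lambda>b c. \<not> c) (\<lambda>a c. \<not> a) (\<lambda>a b. \<not> b) s t"
    unfolding pref_arc_def ex_comparable_jordan_S[where P = "\<lambda>i p q. jordan_u i p \<le> jordan_u i q"]
      best_response_graph_def by (simp only:)
qed

lemma tournament_on_cube_eq_best_response_graph:
  fixes R :: "bool list \<Rightarrow> bool list \<Rightarrow> bool"
  assumes along_edges: "\<And>s t. R s t \<Longrightarrow> \<exists>i. comparable 3 jordan_S i s t"
    and oriented: "\<And>i s t. comparable 3 jordan_S i s t \<Longrightarrow> R s t \<longleftrightarrow> \<not> R t s"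
  shows "R = best_response_graph (\<lambda>b c. R [False, b, c] [True, b, c])
    (\<lambda>a c. R [a, False, c] [a, True, c]) (\<lambda>a b. R [a, b, False] [a, b, True])"
proof (intro ext)
  fix s t
  have edges: "comparable 3 jordan_S 0 [False, b, c] [True, b, c]"
    "comparable 3 jordan_S 1 [a, False, c] [a, True, c]"
    "comparable 3 jordan_S 2 [a, b, False] [a, b, True]" for a b c
    by (auto simp: comparable_jordan_S)
  have "R [a, b, c] [\<not> a, b, c] \<longleftrightarrow> a \<noteq> R [False, b, c] [True, b, c]"
    and "R [a, b, c] [a, \<not> b, c] \<longleftrightarrow> b \<noteq> R [a, False, c] [a, True, c]"
    and "R [a, b, c] [a, b, \<not> c] \<longleftrightarrow> c \<noteq> R [a, b, False] [a, b, True]" for a b c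
    using oriented[OF edges(1)] oriented[OF edges(2)] oriented[OF edges(3)]
    by (cases a; cases b; cases c; simp)+
  moreover have "R s t \<longleftrightarrow> (\<exists>a b c. s = [a, b, c] \<and> (t = [\<not> a, b, c] \<and> R [a, b, c] [\<not> a, b, c] \<or>
      t = [a, \<not> b, c] \<and> R [a, b, c] [a, \<not> b, c] \<or> t = [a, b, \<not> c] \<and> R [a, b, c] [a, b, \<not> c]))"
    using along_edges[of s t] ex_comparable_jordan_S[of s t "\<lambda>_. R"] by auto
  ultimately show "R s t = best_response_graph (\<lambda>b c. R [False, b, c] [True, b, c])
    (\<lambda>a c. R [a, False, c] [a, True, c]) (\<lambda>a b. R [a, b, False] [a, b, True]) s t"
    unfolding best_response_graph_def by (simp only:)
qed

text \<open>
  The hypotheses exclude a pure equilibrium and a face playing matching pennies; the lemma is a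
  finite check over the twelve values of X, Y, Z. A player mismatches exactly if its parameter
  p, q or r is True, and p = (q = r) says that the number of mismatching players is odd.
\<close>

lemma best_response_classification:
  fixes X Y Z :: "bool \<Rightarrow> bool \<Rightarrow> bool"
  assumes "\<And>a b c. X b c \<noteq> a \<or> Y a c \<noteq> b \<or> Z a b \<noteq> c"
    and "\<And>c t. \<not> ((\<forall>b. X b c = (b \<noteq> t)) \<and> (\<forall>a. Y a c = (a = t)))"
    and "\<And>b t. \<not> ((\<forall>c. X b c = (c \<noteq> t)) \<and> (\<forall>a. Z a b = (a = t)))"
    and "\<And>a t. \<not> ((\<forall>c. Y a c = (c \<noteq> t)) \<and> (\<forall>b. Z a b = (b = t)))"
  obtains (clockwise) p q r where "p = (q = r)"
      and "\<forall>a b c. X b c = (c \<noteq> p) \<and> Y a c = (a \<noteq> q) \<and> Z a b = (b \<noteq> r)"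
    | (anticlockwise) p q r where "p = (q = r)"
      and "\<forall>a b c. X b c = (b \<noteq> p) \<and> Y a c = (c \<noteq> q) \<and> Z a b = (a \<noteq> r)"
  using assms[unfolded atomize_all] that[unfolded atomize_all atomize_imp] unfolding all_bool_eq ex_bool_eq by smt

lemma best_response_graph_iso_jordan:
  fixes X Y Z :: "bool \<Rightarrow> bool \<Rightarrow> bool"
  defines "G \<equiv> best_response_graph X Y Z"
  assumes no_sink: "\<And>a b c. \<exists>t. G [a, b, c] t"
    and no_4cycle: "\<And>w x y z. distinct [w, x, y, z] \<Longrightarrow> G w x \<Longrightarrow> G x y \<Longrightarrow> G y z \<Longrightarrow> G z w \<Longrightarrow> False"
  shows "\<exists>g. bij_betw g (profiles 3 jordan_S) (profiles 3 jordan_S) \<and>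
    (\<forall>s \<in> profiles 3 jordan_S. \<forall>t \<in> profiles 3 jordan_S. G s t \<longleftrightarrow> pref_arc 3 jordan_S jordan_u (g s) (g t))"
proof -
  have "X b c \<noteq> a \<or> Y a c \<noteq> b \<or> Z a b \<noteq> c" for a b c
    using no_sink[of a b c] by (auto simp: G_def best_response_graph_def)
  moreover have "\<not> ((\<forall>b. X b c = (b \<noteq> t)) \<and> (\<forall>a. Y a c = (a = t)))" for c t
    using no_4cycle[of "[False, False, c]" "[True, False, c]" "[True, True, c]" "[False, True, c]"]
      no_4cycle[of "[False, False, c]" "[False, True, c]" "[True, True, c]" "[True, False, c]"]
    by (cases t) (auto simp: G_def best_response_graph_lists)
  moreover have "\<not> ((\<forall>c. X b c = (c \<noteq> t)) \<and> (\<forall>a. Z a b = (a = t)))" for b t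
    using no_4cycle[of "[False, b, False]" "[True, b, False]" "[True, b, True]" "[False, b, True]"]
      no_4cycle[of "[False, b, False]" "[False, b, True]" "[True, b, True]" "[True, b, False]"]
    by (cases t) (auto simp: G_def best_response_graph_lists)
  moreover have "\<not> ((\<forall>c. Y a c = (c \<noteq> t)) \<and> (\<forall>b. Z a b = (b = t)))" for a t
    using no_4cycle[of "[a, False, False]" "[a, True, False]" "[a, True, True]" "[a, False, True]"]
      no_4cycle[of "[a, False, False]" "[a, False, True]" "[a, True, True]" "[a, True, False]"]
    by (cases t) (auto simp: G_def best_response_graph_lists)
  ultimately show ?thesis
  proof (rule best_response_classification)
    fix p q r
    \<comment> \<open>Flipping all strategies is an automorphism of Jordan's graph,
      so player 0 keeps its labels.\<close>
    assume "p = (q = r)" and clockwise: "\<forall>a b c. X b c = (c \<noteq> p) \<and> Y a c = (a \<noteq> q) \<and> Z a b = (b \<noteq> r)"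
    define g where "g s = [s ! 0, s ! 1 = q, s ! 2 = p]" for s :: "bool list"
    have "bij_betw g (profiles 3 jordan_S) (profiles 3 jordan_S)"
      by (rule bij_betw_byWitness[where f' = g]) (auto simp: jordan_profiles g_def)
    moreover have "G [a, b, c] [x, y, z] \<longleftrightarrow> pref_arc 3 jordan_S jordan_u (g [a, b, c]) (g [x, y, z])"
      for a b c x y z
      unfolding G_def g_def pref_arc_jordan using clockwise \<open>p = (q = r)\<close>
      by (simp add: best_response_graph_lists) blast
    ultimately show ?thesis by (auto simp: jordan_profiles)
  next
    fix p q r
    assume "p = (q = r)" and anticlockwise: "\<forall>a b c. X b c = (b \<noteq> p) \<and> Y a c = (c \<noteq> q) \<and> Z a b = (a \<noteq> r)"
    define g where "g s = [s ! 0, s ! 2 = r, s ! 1 = p]" for s :: "bool list"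
    have "bij_betw g (profiles 3 jordan_S) (profiles 3 jordan_S)"
      by (rule bij_betw_byWitness[where f' = "\<lambda>s. [s ! 0, s ! 2 = p, s ! 1 = r]"])
        (auto simp: jordan_profiles g_def)
    moreover have "G [a, b, c] [x, y, z] \<longleftrightarrow> pref_arc 3 jordan_S jordan_u (g [a, b, c]) (g [x, y, z])"
      for a b c x y z
      unfolding G_def g_def pref_arc_jordan using anticlockwise \<open>p = (q = r)\<close>
      by (simp add: best_response_graph_lists) blast
    ultimately show ?thesis by (auto simp: jordan_profiles)
  qed
qed

lemma iso_to_jordanI:
  assumes "bij_betw e (profiles 3 jordan_S) (profiles N S)"
    and "bij_betw g (profiles 3 jordan_S) (profiles 3 jordan_S)"
    and "\<forall>s \<in> profiles 3 jordan_S. \<forall>t \<in> profiles 3 jordan_S.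
      pref_arc N S u (e s) (e t) \<longleftrightarrow> pref_arc 3 jordan_S jordan_u (g s) (g t)"
  shows "iso_to_jordan N S u"
proof -
  let ?e' = "inv_into (profiles 3 jordan_S) e"
  have "bij_betw (g \<circ> ?e') (profiles N S) (profiles 3 jordan_S)"
    using bij_betw_trans[OF bij_betw_inv_into[OF assms(1)] assms(2)] .
  moreover have "pref_arc N S u p q \<longleftrightarrow> pref_arc 3 jordan_S jordan_u ((g \<circ> ?e') p) ((g \<circ> ?e') q)"
    if "p \<in> profiles N S" "q \<in> profiles N S" for p q
    using assms(3)[rule_format, of "?e' p" "?e' q"] that assms(1)
    by (simp add: bij_betw_def inv_into_into f_inv_into_f)
  ultimately show ?thesis
    unfolding iso_to_jordan_def by blast
qed

definition bool_labelling :: "(nat \<Rightarrow> 'a) \<Rightarrow> (nat \<Rightarrow> 'a) \<Rightarrow> bool list \<Rightarrow> 'a list" where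
  "bool_labelling a b s = [if s ! 0 then b 0 else a 0, if s ! 1 then b 1 else a 1, if s ! 2 then b 2 else a 2]"

lemma bij_betw_bool_labelling:
  assumes "\<forall>i<3. S i = {a i, b i} \<and> a i \<noteq> b i"
  shows "bij_betw (bool_labelling a b) (profiles 3 jordan_S) (profiles 3 S)"
  by (rule bij_betw_byWitness[where f' = "\<lambda>p. [p ! 0 = b 0, p ! 1 = b 1, p ! 2 = b 2]"])
    (use assms in \<open>auto simp: jordan_profiles profiles_3 bool_labelling_def all_less_3\<close>)

lemma comparable_bool_labelling:
  assumes "\<forall>i<3. S i = {a i, b i} \<and> a i \<noteq> b i"
    and "s \<in> profiles 3 jordan_S" and "t \<in> profiles 3 jordan_S"
  shows "comparable 3 S i (bool_labelling a b s) (bool_labelling a b t) \<longleftrightarrow> comparable 3 jordan_S i s t"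
  using assms
  by (auto simp: jordan_profiles bool_labelling_def comparable_3 profiles_3 all_less_3 jordan_S_def)

lemma pref_arc_bool_labelling_eq_best_response_graph:
  assumes strict: "strict_game 3 S u" and ab: "\<forall>i<3. S i = {a i, b i} \<and> a i \<noteq> b i"
  obtains X Y Z where "\<forall>s \<in> profiles 3 jordan_S. \<forall>t \<in> profiles 3 jordan_S.
    pref_arc 3 S u (bool_labelling a b s) (bool_labelling a b t) \<longleftrightarrow> best_response_graph X Y Z s t"
proof -
  let ?B = "profiles 3 jordan_S" and ?e = "bool_labelling a b"
  define R where "R s t \<longleftrightarrow> s \<in> ?B \<and> t \<in> ?B \<and> pref_arc 3 S u (?e s) (?e t)" for s t
  let ?X = "\<lambda>b c. R [False, b, c] [True, b, c]" and ?Y = "\<lambda>a c. R [a, False, c] [a, True, c]"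
    and ?Z = "\<lambda>a b. R [a, b, False] [a, b, True]"
  have R_eq: "R = best_response_graph ?X ?Y ?Z"
  proof (rule tournament_on_cube_eq_best_response_graph)
    show "\<exists>i. comparable 3 jordan_S i s t" if "R s t" for s t
      using that comparable_bool_labelling[OF ab] by (auto simp: R_def pref_arc_def)
    show "R s t \<longleftrightarrow> \<not> R t s" if "comparable 3 jordan_S i s t" for i s t
    proof -
      have "s \<in> ?B" "t \<in> ?B"
        using that by (auto simp: comparable_def)
      moreover have "comparable 3 S i (?e s) (?e t)"
        using that calculation comparable_bool_labelling[OF ab] by blast
      ultimately show ?thesis
        using pref_arc_iff_less[OF strict] comparable_sym strict
        unfolding R_def strict_game_def by (meson not_less_iff_gr_or_eq)
    qed
  qed
  show ?thesis
  proof (rule that[of ?X ?Y ?Z], intro ballI)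
    fix s t
    assume "s \<in> ?B" "t \<in> ?B"
    then show "pref_arc 3 S u (?e s) (?e t) \<longleftrightarrow> best_response_graph ?X ?Y ?Z s t"
      using R_eq[THEN fun_cong, THEN fun_cong, of s t] by (simp add: R_def)
  qed
qed

lemma iso_to_jordan_if_two_strategies:
  assumes strict: "strict_game 3 S u" and no_sink: "\<not> has_sink 3 S u"
    and no_4cycle: "\<not> has_4cycle 3 S u" and two: "\<forall>i<3. finite (S i) \<and> card (S i) = 2"
  shows "iso_to_jordan 3 S u"
proof -
  let ?B = "profiles 3 jordan_S" and ?P = "profiles 3 S"
  have "\<forall>i<3. \<exists>x y. S i = {x, y} \<and> x \<noteq> y"
    using two by (metis card_2_iff)
  then obtain a b where ab: "\<forall>i<3. S i = {a i, b i} \<and> a i \<noteq> b i"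
    by metis
  let ?e = "bool_labelling a b"
  have e_bij: "bij_betw ?e ?B ?P"
    using ab by (rule bij_betw_bool_labelling)
  obtain X Y Z where XYZ: "\<forall>s\<in>?B. \<forall>t\<in>?B. pref_arc 3 S u (?e s) (?e t) \<longleftrightarrow> best_response_graph X Y Z s t"
    using pref_arc_bool_labelling_eq_best_response_graph[OF strict ab] by blast
  have "\<exists>g. bij_betw g ?B ?B \<and>
      (\<forall>s\<in>?B. \<forall>t\<in>?B. best_response_graph X Y Z s t \<longleftrightarrow> pref_arc 3 jordan_S jordan_u (g s) (g t))"
  proof (rule best_response_graph_iso_jordan)
    fix x y z :: bool
    have "?e [x, y, z] \<in> ?P"
      using e_bij by (auto simp: bij_betw_def jordan_profiles)
    then obtain q where "pref_arc 3 S u (?e [x, y, z]) q"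
      using no_sink by (auto simp: has_sink_def)
    moreover from this have "q \<in> ?P"
      by (auto simp: pref_arc_def comparable_def)
    then obtain t where "t \<in> ?B" "q = ?e t"
      using e_bij by (auto simp: bij_betw_def)
    ultimately show "\<exists>t. best_response_graph X Y Z [x, y, z] t"
      using XYZ by (auto simp: jordan_profiles)
  next
    fix w x y z
    assume "distinct [w, x, y, z]" and arcs: "best_response_graph X Y Z w x"
      "best_response_graph X Y Z x y" "best_response_graph X Y Z y z" "best_response_graph X Y Z z w"
    then have "{w, x, y, z} \<subseteq> ?B"
      using best_response_graph_in_profiles by blast
    then have "distinct [?e w, ?e x, ?e y, ?e z]"
      using \<open>distinct [w, x, y, z]\<close> e_bij by (auto simp: bij_betw_def inj_on_def)
    moreover have "pref_arc 3 S u (?e w) (?e x)" "pref_arc 3 S u (?e x) (?e y)"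
      "pref_arc 3 S u (?e y) (?e z)" "pref_arc 3 S u (?e z) (?e w)"
      using arcs XYZ \<open>{w, x, y, z} \<subseteq> ?B\<close> by auto
    ultimately show False
      using no_4cycle unfolding has_4cycle_def by blast
  qed
  then obtain g where "bij_betw g ?B ?B"
    and "\<forall>s\<in>?B. \<forall>t\<in>?B. best_response_graph X Y Z s t \<longleftrightarrow> pref_arc 3 jordan_S jordan_u (g s) (g t)"
    by blast
  with e_bij XYZ show ?thesis
    by (intro iso_to_jordanI) auto
qed

lemma two_player_card_ge_9:
  assumes "\<forall>i<2. finite (S i) \<and> 2 \<le> card (S i)"
    and "strict_game 2 S u" and "\<not> has_sink 2 S u" and "\<not> has_4cycle 2 S u"
  shows "9 \<le> card (profiles 2 S)"
proof -
  have "3 \<le> card (S k)" if "k < 2" for k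
  proof (rule ccontr)
    assume "\<not> 3 \<le> card (S k)"
    then have "card (S k) = 2"
      using assms(1) that by fastforce
    then obtain a b where "S k = {a, b}" "a \<noteq> b"
      by (meson card_2_iff)
    moreover have "1 - k < 2" "k \<noteq> 1 - k" "S (1 - k) \<noteq> {}"
      using that assms(1) by (auto simp: less_2_cases_iff)
    ultimately have "has_4cycle 2 S u"
      using two_player_has_4cycle[of S u k a b "1 - k"] assms(1-3) that
      by (simp add: finite_profiles_card)
    with assms(4) show False ..
  qed
  then have "3 ^ 2 \<le> card (profiles 2 S)"
    using assms(1) by (intro card_profiles_ge_power) auto
  then show ?thesis
    by simp
qed

lemma card_profiles_3_eq_8_or_ge_12:
  assumes "\<forall>i<3. finite (S i) \<and> 2 \<le> card (S i)"
  shows "(\<forall>i<3. card (S i) = 2) \<and> card (profiles 3 S) = 8 \<or> 12 \<le> card (profiles 3 S)"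
proof (cases "\<forall>i<3. card (S i) = 2")
  case True
  then have "card (profiles 3 S) = (\<Prod>i<3::nat. 2::nat)"
    using assms finite_profiles_card(2)[of 3 S] by simp
  with True show ?thesis
    by simp
next
  case False
  then obtain j where "j < 3" "3 \<le> card (S j)"
    using assms by fastforce
  then show ?thesis
    using card_profiles_ge_3_mult_power[of 3 S j] assms by simp
qed

theorem mainTheorem2:
  fixes N :: nat and S :: "nat \<Rightarrow> 'a set" and u :: "nat \<Rightarrow> 'a list \<Rightarrow> real"
  assumes "\<forall>i<N. finite (S i) \<and> card (S i) \<ge> 2"
    and "strict_game N S u"
    and "\<not> has_sink N S u"
    and "\<not> has_4cycle N S u"
  shows "card (profiles N S) \<ge> 8 \<and>
    (card (profiles N S) = 8 \<longrightarrow>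
       N = 3 \<and> (\<forall>i<3. card (S i) = 2) \<and> iso_to_jordan N S u)"
proof -
  consider "N = 0" | "N = 1" | "N = 2" | "N = 3" | "4 \<le> N"
    by linarith
  then show ?thesis
  proof cases
    case 1
    with assms(3) has_sink_no_players show ?thesis by blast
  next
    case 2
    with assms has_sink_one_player[of S u] show ?thesis by fastforce
  next
    case 3
    with assms two_player_card_ge_9[of S u] show ?thesis by simp
  next
    case 4
    with assms card_profiles_3_eq_8_or_ge_12[of S] iso_to_jordan_if_two_strategies[of S u]
    show ?thesis by auto
  next
    case 5
    then have "2 ^ 4 \<le> card (profiles N S)"
      using assms(1) card_profiles_ge_power[of N S 2] power_increasing[of 4 N "2::nat"] by simp
    then show ?thesis by simp
  qed
qed

end
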